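(* There exist nonempty compact convex sets $C_1, C_2, C_3\subseteq \mathbb{R}^3$ such that for every $\varepsilon\in(0,1]$ there is a unique $\varepsilon$-cycle $\mathbf{u}^\varepsilon=(u_1^\varepsilon,u_2^\varepsilon,u_3^\varepsilon)\in(\mathbb{R}^3)^3$ for $C_1,C_2,C_3$, and moreover the limit $\lim_{\varepsilon\downarrow 0}\mathbf{u}^\varepsilon$ does not exist.
   Context: For a nonempty closed convex set $C\subseteq\mathbb{R}^n$, $\Pi_C(u)$ denotes the (unique) Euclidean projection of $u$ onto $C$, i.e. the point of $C$ closest to $u$. Given nonempty closed convex sets $C_1,\dots,C_m$ and a relaxation parameter $\varepsilon\in(0,1]$, an $\varepsilon$-cycle for $C_1,\dots,C_m$ is an $m$-tuple $(u_1,\dots,u_m)$ satisfying $u_1=u_m+\varepsilon(\Pi_{C_1}(u_m)-u_m)$ and $u_i=u_{i-1}+\varepsilon(\Pi_{C_i}(u_{i-1})-u_{i-1})$ for $i=2,\dots,m$. (These are the limit cycles of the under-relaxed cyclic projection method $u_{n+1}=u_n+\varepsilon(\Pi_{C_{i(n)}}(u_n)-u_n)$ cycling through $C_1,\dots,C_m$.) *)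

theory Defs
  imports "HOL-Analysis.Analysis"
begin

definition proj :: "('a::euclidean_space) set \<Rightarrow> 'a \<Rightarrow> 'a" where
  "proj C u = closest_point C u"

definition relax_step :: "real \<Rightarrow> ('a::euclidean_space) set \<Rightarrow> 'a \<Rightarrow> 'a" where
  "relax_step \<epsilon> C u = u + \<epsilon> *\<^sub>R (proj C u - u)"

definition eps_cycle3 ::
  "real \<Rightarrow> 'a set \<Rightarrow> 'a set \<Rightarrow> 'a set \<Rightarrow> ('a::euclidean_space) \<times> 'a \<times> 'a \<Rightarrow> bool" where
  "eps_cycle3 \<epsilon> C1 C2 C3 u \<longleftrightarrow>
     (case u of (u1, u2, u3) \<Rightarrow>
        u1 = relax_step \<epsilon> C1 u3 \<and> u2 = relax_step \<epsilon> C2 u1 \<and> u3 = relax_step \<epsilon> C3 u2)"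

end

(*
  K1 is the convex hull of a closed curve over the unit circle of the (x2,x3)-plane whose height
  x1 = sin (x2 / (x2 - x3)) oscillates ever faster near the points with x2 = x3; K2 and K3 are
  segments parallel to the x1-axis. For each e, the unit vector normal e = (0, 1, 1 - e) / |...|
  exposes exactly one point touch e of K1, whose height is sin (1 / e). The e-cycle runs along
  the outer normal ray at touch e and through the two segments without changing its x1-coordinate,
  so it has no limit as e tends to 0.
  Uniqueness: relaxed projections onto closed convex sets are nonexpansive, with equality only when
  they translate, so two e-cycles differ by a vector d that also translates their projections.
  Projecting onto K2 forces d onto the x1-axis, and then touch e + d lies in K1 on the supporting
  hyperplane at the exposed point, so d = 0.
*)

theory Submission
  imports Defs
begin

section \<open>Relaxed projections onto closed convex sets\<close>

lemma closest_point_eqI: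
  fixes S :: "'a::euclidean_space set"
  assumes "convex S" "closed S" "p \<in> S" "\<And>y. y \<in> S \<Longrightarrow> (a - p) \<bullet> (y - p) \<le> 0"
  shows "closest_point S a = p"
proof -
  have "dist a p \<le> dist a y" if "y \<in> S" for y
  proof -
    have "(dist a y)\<^sup>2 = (dist a p)\<^sup>2 + (dist p y)\<^sup>2 - 2 * ((a - p) \<bullet> (y - p))"
      unfolding dist_norm power2_norm_eq_inner
      by (simp add: inner_diff_left inner_diff_right inner_commute[of a p] inner_commute[of a y]
          inner_commute[of p y] algebra_simps)
    then have "(dist a p)\<^sup>2 \<le> (dist a y)\<^sup>2"
      using assms(4)[OF that] by (smt (verit) zero_le_power2)
    then show ?thesis by (simp add: power2_le_iff_abs_le)
  qed
  then show ?thesis using closest_point_unique[OF assms(1-3)] by simp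
qed

lemma closest_point_firmly_nonexpansive:
  fixes S :: "'a::euclidean_space set"
  assumes "convex S" "closed S" "S \<noteq> {}"
  shows "(norm (closest_point S x - closest_point S y))\<^sup>2
           \<le> (x - y) \<bullet> (closest_point S x - closest_point S y)"
proof -
  define px py where "px = closest_point S x" and "py = closest_point S y"
  have "(x - px) \<bullet> (py - px) \<le> 0" "(y - py) \<bullet> (px - py) \<le> 0"
    unfolding px_def py_def by (intro closest_point_dot closest_point_in_set assms)+
  moreover have "(x - y) \<bullet> (px - py) - (px - py) \<bullet> (px - py)
      = - ((x - px) \<bullet> (py - px)) - (y - py) \<bullet> (px - py)"
    by (simp add: inner_diff_left inner_diff_right)
  ultimately show ?thesis
    unfolding px_def[symmetric] py_def[symmetric] power2_norm_eq_inner by linarith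
qed

lemma relax_step_diff:
  "relax_step e C x - relax_step e C y = (x - y) + e *\<^sub>R ((proj C x - proj C y) - (x - y))"
  by (simp add: relax_step_def algebra_simps)

lemma norm_relax_step_diff_le:
  fixes C :: "'a::euclidean_space set"
  assumes "convex C" "closed C" "C \<noteq> {}" "0 \<le> e"
  shows "(norm (relax_step e C x - relax_step e C y))\<^sup>2
           + e * (2 - e) * (norm ((proj C x - proj C y) - (x - y)))\<^sup>2 \<le> (norm (x - y))\<^sup>2"
proof -
  define a b where "a = x - y" and "b = proj C x - proj C y"
  have "b \<bullet> b \<le> a \<bullet> b"
    using closest_point_firmly_nonexpansive[OF assms(1-3), of x y]
    unfolding a_def b_def proj_def power2_norm_eq_inner .
  moreover have "(norm (a + e *\<^sub>R (b - a)))\<^sup>2 + e * (2 - e) * (norm (b - a))\<^sup>2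
                   = (norm a)\<^sup>2 - 2 * e * (a \<bullet> b - b \<bullet> b)"
    unfolding power2_norm_eq_inner
    by (simp add: inner_diff_left inner_diff_right inner_add_left inner_add_right
        inner_commute[of b a] algebra_simps)
  ultimately show ?thesis
    using assms(4) unfolding relax_step_diff a_def[symmetric] b_def[symmetric]
    by (simp add: mult_nonneg_nonneg)
qed

lemma relax_step_nonexpansive:
  fixes C :: "'a::euclidean_space set"
  assumes "convex C" "closed C" "C \<noteq> {}" "0 \<le> e" "e \<le> 2"
  shows "norm (relax_step e C x - relax_step e C y) \<le> norm (x - y)"
proof -
  have "0 \<le> e * (2 - e) * (norm ((proj C x - proj C y) - (x - y)))\<^sup>2"
    using assms(4,5) by simp
  then have "(norm (relax_step e C x - relax_step e C y))\<^sup>2 \<le> (norm (x - y))\<^sup>2"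
    using norm_relax_step_diff_le[OF assms(1-4), of x y] by linarith
  then show ?thesis by (simp add: power2_le_iff_abs_le)
qed

lemma relax_step_isometric_imp_proj_diff:
  fixes C :: "'a::euclidean_space set"
  assumes "convex C" "closed C" "C \<noteq> {}" "0 < e" "e < 2"
    and "norm (x - y) \<le> norm (relax_step e C x - relax_step e C y)"
  shows "proj C x - proj C y = x - y"
proof -
  have "(norm (x - y))\<^sup>2 \<le> (norm (relax_step e C x - relax_step e C y))\<^sup>2"
    using assms(6) by (simp add: power_mono)
  then have "e * (2 - e) * (norm ((proj C x - proj C y) - (x - y)))\<^sup>2 \<le> 0"
    using norm_relax_step_diff_le[OF assms(1-3), of e x y] assms(4) by linarith
  moreover have "0 < e * (2 - e)" using assms(4,5) by simp
  ultimately have "(norm ((proj C x - proj C y) - (x - y)))\<^sup>2 \<le> 0"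
    by (metis mult_le_0_iff not_less zero_le_power2)
  then show ?thesis by simp
qed

lemma eps_cycle3_translate:
  fixes C1 C2 C3 :: "'a::euclidean_space set"
  assumes C1: "convex C1" "closed C1" "C1 \<noteq> {}"
    and C2: "convex C2" "closed C2" "C2 \<noteq> {}"
    and C3: "convex C3" "closed C3" "C3 \<noteq> {}"
    and e: "0 < e" "e \<le> 1"
    and u: "eps_cycle3 e C1 C2 C3 (u1, u2, u3)"
    and w: "eps_cycle3 e C1 C2 C3 (w1, w2, w3)"
  defines "d \<equiv> w3 - u3"
  shows "w1 = u1 + d" "w2 = u2 + d"
    and "proj C1 w3 = proj C1 u3 + d" "proj C2 w1 = proj C2 u1 + d"
proof -
  have u': "u1 = relax_step e C1 u3" "u2 = relax_step e C2 u1" "u3 = relax_step e C3 u2"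
    and w': "w1 = relax_step e C1 w3" "w2 = relax_step e C2 w1" "w3 = relax_step e C3 w2"
    using u w unfolding eps_cycle3_def prod.case by blast+
  txt \<open>Every step is nonexpansive and a full turn returns to the start, so every step
    preserves the distance between the two cycles.\<close>
  have "norm (relax_step e C1 w3 - relax_step e C1 u3) \<le> norm (w3 - u3)"
    "norm (relax_step e C2 w1 - relax_step e C2 u1) \<le> norm (w1 - u1)"
    "norm (relax_step e C3 w2 - relax_step e C3 u2) \<le> norm (w2 - u2)"
    using e by (intro relax_step_nonexpansive C1 C2 C3; simp)+
  then have "norm (w3 - u3) \<le> norm (relax_step e C1 w3 - relax_step e C1 u3)"
    "norm (w1 - u1) \<le> norm (relax_step e C2 w1 - relax_step e C2 u1)"
    unfolding u'[symmetric] w'[symmetric] by linarith+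
  then have p1: "proj C1 w3 - proj C1 u3 = w3 - u3" and p2: "proj C2 w1 - proj C2 u1 = w1 - u1"
    using e by (intro relax_step_isometric_imp_proj_diff C1 C2; simp)+
  have "w1 - u1 = d"
    using p1 relax_step_diff[of e C1 w3 u3] unfolding d_def u'[symmetric] w'[symmetric] by simp
  moreover have "w2 - u2 = w1 - u1"
    using p2 relax_step_diff[of e C2 w1 u1] unfolding u'[symmetric] w'[symmetric] by simp
  ultimately show "w1 = u1 + d" "w2 = u2 + d" "proj C1 w3 = proj C1 u3 + d"
    "proj C2 w1 = proj C2 u1 + d"
    using p1 p2 unfolding d_def by (metis add.commute diff_eq_eq)+
qed

section \<open>Faces of convex hulls and the oscillation of sin (1 / x)\<close>

lemma convex_hull_Int_supporting_hyperplane: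
  fixes S :: "'a::euclidean_space set"
  assumes "compact S" "\<And>x. x \<in> S \<Longrightarrow> a \<bullet> x \<le> b"
  shows "convex hull S \<inter> {x. a \<bullet> x = b} = convex hull (S \<inter> {x. a \<bullet> x = b})"
proof
  have "convex hull S \<subseteq> {x. a \<bullet> x \<le> b}"
    using assms(2) by (intro hull_minimal) (auto simp: convex_halfspace_le)
  then have "(convex hull S \<inter> {x. a \<bullet> x = b}) face_of convex hull S"
    by (intro face_of_Int_supporting_hyperplane_le) auto
  then obtain S' where S': "S' \<subseteq> S" "convex hull S \<inter> {x. a \<bullet> x = b} = convex hull S'"
    using face_of_convex_hull_subset[OF assms(1)] by metis
  then have "S' \<subseteq> S \<inter> {x. a \<bullet> x = b}"
    using hull_subset[of S' convex] by blast
  then show "convex hull S \<inter> {x. a \<bullet> x = b} \<subseteq> convex hull (S \<inter> {x. a \<bullet> x = b})"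
    using S'(2) by (simp add: hull_mono)
  show "convex hull (S \<inter> {x. a \<bullet> x = b}) \<subseteq> convex hull S \<inter> {x. a \<bullet> x = b}"
    by (simp add: hull_mono hull_minimal convex_hyperplane)
qed

lemma isCont_mult_sin_divide:
  fixes f g :: "'a::t2_space \<Rightarrow> real"
  assumes "isCont f x" "isCont g x"
  shows "isCont (\<lambda>y. g y * sin (f y / g y)) x"
proof (cases "g x = 0")
  case False
  then show ?thesis using assms by (intro continuous_intros)
next
  case True
  have "((\<lambda>y. \<bar>g y\<bar>) \<longlongrightarrow> 0) (at x)"
    using assms(2) True unfolding isCont_def by (metis abs_zero tendsto_rabs)
  then have "((\<lambda>y. g y * sin (f y / g y)) \<longlongrightarrow> 0) (at x)"
    by (rule Lim_null_comparison[rotated])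
       (auto simp: abs_mult intro!: always_eventually mult_left_le)
  then show ?thesis using True unfolding isCont_def by simp
qed

lemma sin_not_tendsto_at_top: "\<not> ((sin :: real \<Rightarrow> real) \<longlongrightarrow> l) at_top"
proof
  assume lim: "(sin \<longlongrightarrow> l) at_top"
  have "sin c = l" for c :: real
  proof -
    have "filterlim (\<lambda>n. c + 2 * pi * real n) at_top sequentially"
      by (intro filterlim_tendsto_add_at_top[OF tendsto_const]
          filterlim_tendsto_pos_mult_at_top[OF tendsto_const] filterlim_real_sequentially) simp
    then have "((\<lambda>n. sin (c + 2 * pi * real n)) \<longlongrightarrow> l) sequentially"
      using filterlim_compose[OF lim] by blast
    moreover have "sin (c + 2 * pi * real n) = sin c" for n
      using sin_add[of c "2 * real n * pi"] cos_2npi[of n] sin_2npi[of n]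
      by (simp add: mult.commute mult.left_commute)
    ultimately have "(\<lambda>n. sin c) \<longlonglongrightarrow> l"
      by simp
    then show ?thesis
      using LIMSEQ_unique tendsto_const by blast
  qed
  from this[of 0] this[of "pi / 2"] show False by simp
qed

lemma sin_inverse_not_tendsto_at_right_0:
  "\<not> ((\<lambda>x. sin (1 / x)) \<longlongrightarrow> l) (at_right (0::real))"
  using sin_not_tendsto_at_top[of l] unfolding filterlim_at_top_to_right
  by (simp add: divide_inverse)

section \<open>The three sets\<close>

text \<open>The closure of the graph of x1 = sin (x2 / (x2 - x3)) over the unit circle of the
  (x2,x3)-plane: the factor x2 - x3 adds the vertical segments over the two points
  with x2 = x3.\<close>
definition sine_loop :: "(real^3) set" where
  "sine_loop = {x. (x$2)\<^sup>2 + (x$3)\<^sup>2 = 1 \<and> \<bar>x$1\<bar> \<le> 1 \<and>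
                   (x$2 - x$3) * x$1 = (x$2 - x$3) * sin (x$2 / (x$2 - x$3))}"

definition K1 :: "(real^3) set" where "K1 = convex hull sine_loop"
definition K2 :: "(real^3) set" where "K2 = cbox (vector [-1, 0, 3]) (vector [1, 0, 3])"
definition K3 :: "(real^3) set" where "K3 = cbox (vector [-1, 3, 0]) (vector [1, 3, 0])"

lemma inner_vec3: "x \<bullet> y = x$1 * y$1 + x$2 * y$2 + x$3 * y$3" for x y :: "real^3"
  by (simp add: inner_vec_def sum_3)

lemma compact_sine_loop: "compact sine_loop"
unfolding compact_eq_bounded_closed
proof
  have "isCont (\<lambda>x::real^3. x$2) x" "isCont (\<lambda>x::real^3. x$2 - x$3) x" for x
    by (intro continuous_intros)+
  then have cont: "continuous_on UNIV (\<lambda>x::real^3. (x$2 - x$3) * sin (x$2 / (x$2 - x$3)))"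
    by (intro continuous_at_imp_continuous_on ballI isCont_mult_sin_divide)
  then show "closed sine_loop"
    unfolding sine_loop_def
    by (intro closed_Collect_conj closed_Collect_eq[OF _ cont] closed_Collect_eq closed_Collect_le
        continuous_intros)
  have "sine_loop \<subseteq> cbox (vector [-1, -1, -1]) (vector [1, 1, 1])"
  proof
    fix x assume "x \<in> sine_loop"
    then have "(x$2)\<^sup>2 + (x$3)\<^sup>2 = 1" "\<bar>x$1\<bar> \<le> 1" by (auto simp: sine_loop_def)
    moreover have "(x$2)\<^sup>2 \<le> 1" "(x$3)\<^sup>2 \<le> 1"
      using calculation(1) zero_le_power2[of "x$2"] zero_le_power2[of "x$3"] by linarith+
    ultimately have "\<bar>x$1\<bar> \<le> 1" "\<bar>x$2\<bar> \<le> 1" "\<bar>x$3\<bar> \<le> 1"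
      by (simp_all add: abs_square_le_1)
    then show "x \<in> cbox (vector [-1, -1, -1]) (vector [1, 1, 1])"
      by (auto simp: mem_box_cart forall_3 abs_le_iff)
  qed
  then show "bounded sine_loop"
    using bounded_cbox bounded_subset by blast
qed

definition normal_len :: "real \<Rightarrow> real" where
  "normal_len e = sqrt (1 + (1 - e)\<^sup>2)"

definition normal :: "real \<Rightarrow> real^3" where
  "normal e = vector [0, 1 / normal_len e, (1 - e) / normal_len e]"

definition touch :: "real \<Rightarrow> real^3" where
  "touch e = vector [sin (1 / e), 1 / normal_len e, (1 - e) / normal_len e]"

lemma normal_len_pos: "0 < normal_len e"
  by (simp add: normal_len_def add_pos_nonneg)

lemma normal_len_sq: "(normal_len e)\<^sup>2 = 1 + (1 - e)\<^sup>2"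
  by (simp add: normal_len_def add_nonneg_nonneg)

lemma inner_normal: "normal e \<bullet> x = (x$2 + (1 - e) * x$3) / normal_len e"
  by (simp add: normal_def inner_vec3 add_divide_distrib)

lemma inner_normal_touch: "normal e \<bullet> touch e = 1"
  using normal_len_pos[of e] normal_len_sq[of e]
  by (simp add: inner_normal touch_def field_simps power2_eq_square)

lemma touch_in_sine_loop:
  assumes "0 < e"
  shows "touch e \<in> sine_loop"
proof -
  have "(1 / normal_len e) / (1 / normal_len e - (1 - e) / normal_len e) = 1 / e"
    using normal_len_pos[of e] assms by (simp add: field_simps)
  moreover have "(1 / normal_len e)\<^sup>2 + ((1 - e) / normal_len e)\<^sup>2 = 1"
    using normal_len_pos[of e] normal_len_sq[of e] by (simp add: field_simps power2_eq_square)
  ultimately show ?thesis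
    by (simp add: sine_loop_def touch_def abs_sin_le_one)
qed

lemma sine_loop_Lagrange_identity:
  assumes "x \<in> sine_loop"
  shows "(normal_len e)\<^sup>2 - (x$2 + (1 - e) * x$3)\<^sup>2 = ((1 - e) * x$2 - x$3)\<^sup>2"
proof -
  have "(x$2)\<^sup>2 + (x$3)\<^sup>2 = 1" using assms by (simp add: sine_loop_def)
  then have "(normal_len e)\<^sup>2 = (1 + (1 - e)\<^sup>2) * ((x$2)\<^sup>2 + (x$3)\<^sup>2)"
    by (simp add: normal_len_sq)
  then show ?thesis by (simp add: power2_eq_square algebra_simps)
qed

lemma sine_loop_inner_normal_le:
  assumes "x \<in> sine_loop"
  shows "normal e \<bullet> x \<le> 1"
proof -
  have "(x$2 + (1 - e) * x$3)\<^sup>2 \<le> (normal_len e)\<^sup>2"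
    using sine_loop_Lagrange_identity[OF assms, of e] zero_le_power2[of "(1 - e) * x$2 - x$3"]
    by linarith
  then have "x$2 + (1 - e) * x$3 \<le> normal_len e"
    using normal_len_pos[of e] by (simp add: power2_le_iff_abs_le)
  then show ?thesis
    using normal_len_pos[of e] by (simp add: inner_normal)
qed

lemma sine_loop_inner_normal_eq_1:
  assumes "0 < e" "x \<in> sine_loop" "normal e \<bullet> x = 1"
  shows "x = touch e"
proof -
  have N: "normal_len e \<noteq> 0" "(normal_len e)\<^sup>2 = 1 + (1 - e)\<^sup>2"
    using normal_len_pos[of e] normal_len_sq[of e] by simp_all
  have lin: "x$2 + (1 - e) * x$3 = normal_len e"
    using assms(3) N(1) by (simp add: inner_normal field_simps)
  then have x3: "x$3 = (1 - e) * x$2"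
    using sine_loop_Lagrange_identity[OF assms(2), of e] by simp
  have "(x$2 * normal_len e) * normal_len e = x$2 * (normal_len e)\<^sup>2"
    by (simp add: power2_eq_square)
  also have "\<dots> = x$2 + (1 - e) * x$3"
    unfolding N(2) x3 by (simp add: power2_eq_square algebra_simps)
  also have "\<dots> = normal_len e"
    by (rule lin)
  finally have "x$2 * normal_len e = 1"
    using N(1) by (simp add: mult_cancel_right2)
  then have x2: "x$2 = 1 / normal_len e"
    using N(1) by (simp add: field_simps)
  then have x23: "x$2 = 1 / normal_len e" "x$3 = (1 - e) / normal_len e"
    using x3 by simp_all
  then have "x$2 - x$3 = e / normal_len e"
    by (simp add: diff_divide_distrib)
  then have "x$2 - x$3 \<noteq> 0" "x$2 / (x$2 - x$3) = 1 / e"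
    using assms(1) N(1) by (simp_all add: x2)
  then have "x$1 = sin (1 / e)"
    using assms(2) by (simp add: sine_loop_def)
  with x23 show ?thesis
    by (simp add: touch_def vec_eq_iff forall_3)
qed

lemma K1_subset_halfspace_normal: "K1 \<subseteq> {x. normal e \<bullet> x \<le> 1}"
  unfolding K1_def
  by (rule hull_minimal) (auto simp: sine_loop_inner_normal_le convex_halfspace_le)

lemma K1_Int_hyperplane_normal:
  assumes "0 < e"
  shows "K1 \<inter> {x. normal e \<bullet> x = 1} = {touch e}"
proof -
  have "sine_loop \<inter> {x. normal e \<bullet> x = 1} = {touch e}"
    using assms touch_in_sine_loop inner_normal_touch sine_loop_inner_normal_eq_1 by blast
  then show ?thesis
    unfolding K1_def
    by (simp add: convex_hull_Int_supporting_hyperplane compact_sine_loop sine_loop_inner_normal_le)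
qed

lemma K1_nonempty_compact_convex: "K1 \<noteq> {}" "compact K1" "convex K1"
  using touch_in_sine_loop[of 1]
  by (auto simp: K1_def compact_convex_hull compact_sine_loop dest: hull_inc[of _ _ convex])

lemma K2_nonempty_compact_convex: "K2 \<noteq> {}" "compact K2" "convex K2"
  by (auto simp: K2_def interval_eq_empty_cart forall_3 compact_cbox convex_box)

lemma K3_nonempty_compact_convex: "K3 \<noteq> {}" "compact K3" "convex K3"
  by (auto simp: K3_def interval_eq_empty_cart forall_3 compact_cbox convex_box)

lemma proj_K1:
  assumes "0 < e" "0 \<le> t"
  shows "proj K1 (touch e + t *\<^sub>R normal e) = touch e"
  unfolding proj_def
proof (rule closest_point_eqI)
  show "convex K1" "closed K1"
    using K1_nonempty_compact_convex by (simp_all add: compact_imp_closed)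
  show "touch e \<in> K1"
    unfolding K1_def by (rule hull_inc) (rule touch_in_sine_loop[OF assms(1)])
  fix y assume "y \<in> K1"
  then have "normal e \<bullet> y \<le> 1"
    using K1_subset_halfspace_normal by blast
  then have "t * (normal e \<bullet> y - 1) \<le> 0"
    using assms(2) by (simp add: mult_nonneg_nonpos)
  then show "(touch e + t *\<^sub>R normal e - touch e) \<bullet> (y - touch e) \<le> 0"
    by (simp add: inner_diff_right inner_normal_touch right_diff_distrib)
qed

lemma proj_K2:
  assumes "\<bar>x$1\<bar> \<le> 1"
  shows "proj K2 x = vector [x$1, 0, 3]"
  unfolding proj_def
proof (rule closest_point_eqI)
  show "convex K2" "closed K2"
    using K2_nonempty_compact_convex by (simp_all add: compact_imp_closed)
  show "vector [x$1, 0, 3] \<in> K2"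
    using assms by (simp add: K2_def mem_box_cart forall_3 abs_le_iff)
  show "(x - vector [x$1, 0, 3]) \<bullet> (y - vector [x$1, 0, 3]) \<le> 0" if "y \<in> K2" for y
    using that by (auto simp: K2_def mem_box_cart forall_3 inner_vec3)
qed

lemma proj_K3:
  assumes "\<bar>x$1\<bar> \<le> 1"
  shows "proj K3 x = vector [x$1, 3, 0]"
  unfolding proj_def
proof (rule closest_point_eqI)
  show "convex K3" "closed K3"
    using K3_nonempty_compact_convex by (simp_all add: compact_imp_closed)
  show "vector [x$1, 3, 0] \<in> K3"
    using assms by (simp add: K3_def mem_box_cart forall_3 abs_le_iff)
  show "(x - vector [x$1, 3, 0]) \<bullet> (y - vector [x$1, 3, 0]) \<le> 0" if "y \<in> K3" for y
    using that by (auto simp: K3_def mem_box_cart forall_3 inner_vec3)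
qed

section \<open>The e-cycle\<close>

text \<open>offset e is the solution of the linear equation offset_fixed_point, which says that the
  third relaxed step returns to cyc3.\<close>
definition offset :: "real \<Rightarrow> real" where
  "offset e = (3 * normal_len e + e - 2) / (3 - 3 * e + e\<^sup>2)"

definition cyc1 :: "real \<Rightarrow> real^3" where
  "cyc1 e = touch e + ((1 - e) * offset e) *\<^sub>R normal e"
definition cyc2 :: "real \<Rightarrow> real^3" where
  "cyc2 e = (1 - e) *\<^sub>R cyc1 e + e *\<^sub>R vector [sin (1 / e), 0, 3]"
definition cyc3 :: "real \<Rightarrow> real^3" where
  "cyc3 e = touch e + offset e *\<^sub>R normal e"

lemma offset_denominator_pos: "0 < 3 - 3 * e + e\<^sup>2" for e :: real
proof -
  have "0 \<le> (e - 3 / 2)\<^sup>2" by simp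
  then show ?thesis by (simp add: power2_eq_square algebra_simps)
qed

lemma offset_nonneg:
  assumes "0 \<le> e"
  shows "0 \<le> offset e"
proof -
  have "1 \<le> normal_len e" by (simp add: normal_len_def)
  then show ?thesis
    using assms offset_denominator_pos[of e] by (simp add: offset_def)
qed

lemma offset_fixed_point:
  "(1 - e)\<^sup>2 * (1 + (1 - e) * offset e) + 3 * e * normal_len e = 1 + offset e"
  using offset_denominator_pos[of e]
  by (simp add: offset_def field_simps power2_eq_square)

lemma cyc_nth_1: "cyc1 e $ 1 = sin (1 / e)" "cyc2 e $ 1 = sin (1 / e)"
  by (simp_all add: cyc1_def cyc2_def touch_def normal_def algebra_simps)

lemma eps_cycle3_cyc:
  assumes "0 < e"
  shows "eps_cycle3 e K1 K2 K3 (cyc1 e, cyc2 e, cyc3 e)"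
proof -
  have "relax_step e K1 (cyc3 e) = cyc1 e"
    using proj_K1[OF assms offset_nonneg[of e]] assms
    by (simp add: relax_step_def cyc1_def cyc3_def algebra_simps)
  moreover have "relax_step e K2 (cyc1 e) = cyc2 e"
    using proj_K2[of "cyc1 e"]
    by (simp add: relax_step_def cyc2_def cyc_nth_1 abs_sin_le_one algebra_simps)
  moreover have "relax_step e K3 (cyc2 e) = cyc3 e"
  proof -
    define a where "a = 1 + (1 - e) * offset e"
    have N: "normal_len e \<noteq> 0" using normal_len_pos[of e] by simp
    have c1: "cyc1 e = vector [sin (1 / e), a / normal_len e, (1 - e) * a / normal_len e]"
      using N by (simp add: cyc1_def a_def touch_def normal_def vec_eq_iff forall_3 field_simps)
    have "cyc3 e = vector [sin (1 / e), (1 + offset e) / normal_len e,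
        (1 - e) * (1 + offset e) / normal_len e]"
      using N by (simp add: cyc3_def touch_def normal_def vec_eq_iff forall_3 field_simps)
    then have c3: "cyc3 e = vector [sin (1 / e),
        ((1 - e)\<^sup>2 * a + 3 * e * normal_len e) / normal_len e,
        (1 - e) * ((1 - e)\<^sup>2 * a + 3 * e * normal_len e) / normal_len e]"
      unfolding a_def offset_fixed_point .
    show ?thesis
      using proj_K3[of "cyc2 e"] N
      by (simp add: relax_step_def cyc_nth_1 abs_sin_le_one cyc2_def c1 c3 vec_eq_iff forall_3
          field_simps power2_eq_square)
  qed
  ultimately show ?thesis
    by (simp add: eps_cycle3_def)
qed

lemma eps_cycle3_K_eq_cyc:
  assumes e: "0 < e" "e \<le> 1" and "eps_cycle3 e K1 K2 K3 w"
  shows "w = (cyc1 e, cyc2 e, cyc3 e)"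
proof -
  obtain w1 w2 w3 where w_eq: "w = (w1, w2, w3)"
    by (cases w)
  with assms(3) have w: "eps_cycle3 e K1 K2 K3 (w1, w2, w3)"
    by simp
  define d where "d = w3 - cyc3 e"
  note K1 = K1_nonempty_compact_convex and K2 = K2_nonempty_compact_convex
    and K3 = K3_nonempty_compact_convex
  note translate = eps_cycle3_translate[OF K1(3) compact_imp_closed[OF K1(2)] K1(1)
      K2(3) compact_imp_closed[OF K2(2)] K2(1) K3(3) compact_imp_closed[OF K3(2)] K3(1)
      e eps_cycle3_cyc[OF e(1)] w, folded d_def]
  have "proj K2 x \<in> K2" for x
    unfolding proj_def by (intro closest_point_in_set compact_imp_closed K2)
  then have "proj K2 (cyc1 e) \<in> K2" "proj K2 (cyc1 e) + d \<in> K2"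
    using translate(4) by metis+
  then have "d$2 = 0" "d$3 = 0"
    by (auto simp: K2_def mem_box_cart forall_3)
  then have "normal e \<bullet> d = 0"
    by (simp add: inner_normal)
  then have "normal e \<bullet> (touch e + d) = 1"
    by (simp add: inner_add_right inner_normal_touch)
  moreover have "touch e + d \<in> K1"
    using translate(3) proj_K1[OF e(1) offset_nonneg[of e]] closest_point_in_set[of K1 w3]
      compact_imp_closed[OF K1(2)] K1(1) e(1)
    by (simp add: cyc3_def proj_def)
  ultimately have "touch e + d = touch e"
    using K1_Int_hyperplane_normal[OF e(1)] by blast
  then show ?thesis
    using translate(1,2) by (simp add: w_eq d_def)
qed

lemma cyc_not_tendsto_at_right_0:
  "\<not> ((\<lambda>e. (cyc1 e, cyc2 e, cyc3 e)) \<longlongrightarrow> L) (at_right 0)"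
proof
  assume "((\<lambda>e. (cyc1 e, cyc2 e, cyc3 e)) \<longlongrightarrow> L) (at_right 0)"
  then have "((\<lambda>e. fst (cyc1 e, cyc2 e, cyc3 e) $ 1) \<longlongrightarrow> fst L $ 1) (at_right 0)"
    by (intro tendsto_vec_nth tendsto_fst)
  then show False
    using sin_inverse_not_tendsto_at_right_0 by (simp add: cyc_nth_1)
qed

theorem theorem1:
  shows "\<exists>C1 C2 C3 :: (real^3) set.
    C1 \<noteq> {} \<and> compact C1 \<and> convex C1 \<and>
    C2 \<noteq> {} \<and> compact C2 \<and> convex C2 \<and>
    C3 \<noteq> {} \<and> compact C3 \<and> convex C3 \<and>
    (\<forall>\<epsilon>::real. 0 < \<epsilon> \<and> \<epsilon> \<le> 1 \<longrightarrow> (\<exists>!u. eps_cycle3 \<epsilon> C1 C2 C3 u)) \<and>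
    \<not> (\<exists>L. ((\<lambda>\<epsilon>. THE u. eps_cycle3 \<epsilon> C1 C2 C3 u) \<longlongrightarrow> L) (at_right 0))"
proof (rule exI[of _ K1], rule exI[of _ K2], rule exI[of _ K3],
    intro conjI K1_nonempty_compact_convex K2_nonempty_compact_convex K3_nonempty_compact_convex)
  have unique: "\<exists>!u. eps_cycle3 \<epsilon> K1 K2 K3 u" if "0 < \<epsilon>" "\<epsilon> \<le> 1" for \<epsilon>
    using eps_cycle3_cyc[OF that(1)] eps_cycle3_K_eq_cyc[OF that] by blast
  then show "\<forall>\<epsilon>::real. 0 < \<epsilon> \<and> \<epsilon> \<le> 1 \<longrightarrow> (\<exists>!u. eps_cycle3 \<epsilon> K1 K2 K3 u)"
    by blast
  have eventually_cyc:
    "\<forall>\<^sub>F \<epsilon> in at_right 0. (THE u. eps_cycle3 \<epsilon> K1 K2 K3 u) = (cyc1 \<epsilon>, cyc2 \<epsilon>, cyc3 \<epsilon>)"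
    unfolding eventually_at_right_field
    by (rule exI[of _ 1]) (auto intro!: the1_equality unique eps_cycle3_cyc)
  show "\<not> (\<exists>L. ((\<lambda>\<epsilon>. THE u. eps_cycle3 \<epsilon> K1 K2 K3 u) \<longlongrightarrow> L) (at_right 0))"
    by (simp add: tendsto_cong[OF eventually_cyc] cyc_not_tendsto_at_right_0)
qed

end
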